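(* Let $A$ be a unique factorization domain and $R$ a subring of $A$ whose group of units equals that of $A$. Consider: (i) $\operatorname{Irr}R\subset\operatorname{Irr}A$; (ii) $\operatorname{Sqf}R\subset\operatorname{Sqf}A$; (iii) $\operatorname{Irr}R\subset\operatorname{Sqf}A$. Then (i) implies (ii) and (ii) implies (iii).
   Context: For a commutative ring $R$, $\operatorname{Irr}R$ is the set of irreducible elements of $R$ and $\operatorname{Sqf}R$ the set of square-free elements, where $a\in R$ is square-free if it cannot be written as $a=b^2c$ with $b,c\in R$ and $b$ not a unit of $R$. *)

theory Defs
  imports "HOL-Computational_Algebra.Computational_Algebra"
begin

definition is_subring :: "'a::comm_ring_1 set \<Rightarrow> bool" where
  "is_subring R \<longleftrightarrow> 0 \<in> R \<and> 1 \<in> R \<and>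
     (\<forall>x\<in>R. \<forall>y\<in>R. x + y \<in> R \<and> x * y \<in> R) \<and> (\<forall>x\<in>R. - x \<in> R)"

definition units_in :: "'a::comm_ring_1 set \<Rightarrow> 'a set" where
  "units_in R = {x \<in> R. \<exists>y\<in>R. x * y = 1}"

definition Irr_in :: "'a::comm_ring_1 set \<Rightarrow> 'a set" where
  "Irr_in R = {p \<in> R. p \<noteq> 0 \<and> p \<notin> units_in R \<and>
      (\<forall>a\<in>R. \<forall>b\<in>R. p = a * b \<longrightarrow> a \<in> units_in R \<or> b \<in> units_in R)}"

definition Sqf_in :: "'a::comm_ring_1 set \<Rightarrow> 'a set" where
  "Sqf_in R = {a \<in> R. \<not> (\<exists>b\<in>R. \<exists>c\<in>R. a = b ^ 2 * c \<and> b \<notin> units_in R)}"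

end

theory Submission
  imports Defs
begin

text \<open>Since \<open>R\<close> and \<open>A\<close> have the same units, every element of \<open>R\<close> divisible by a prime \<open>p\<close>
  of \<open>A\<close> has an \<open>R\<close>-irreducible factor divisible by \<open>p\<close>: keep splitting off non-trivial
  factorizations in \<open>R\<close>, which terminates because each one lowers the number of prime factors
  in \<open>A\<close>. Under (i) such a factor is an associate of \<open>p\<close>. So if \<open>p\<^sup>2\<close> divides \<open>a \<in> R\<close>, two
  such factors can be split off in succession; being associates of each other, they exhibit
  \<open>a = b\<^sup>2 c\<close> in \<open>R\<close> with \<open>b\<close> a non-unit. The second implication holds in any ring, since
  \<open>Irr R \<subseteq> Sqf R\<close>: if \<open>b (b c)\<close> is irreducible in \<open>R\<close>, then \<open>b\<close> is a unit of \<open>R\<close>.\<close>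

lemma is_subring_mult: "is_subring R \<Longrightarrow> x \<in> R \<Longrightarrow> y \<in> R \<Longrightarrow> x * y \<in> R"
  by (simp add: is_subring_def)

lemma zero_notin_Sqf_in: "is_subring R \<Longrightarrow> 0 \<notin> Sqf_in R"
  by (auto simp: Sqf_in_def units_in_def is_subring_def intro!: bexI[of _ 0])

lemma units_in_multD:
  assumes "is_subring R" "x \<in> R" "y \<in> R" "x * y \<in> units_in R"
  shows "x \<in> units_in R"
proof -
  from assms(4) obtain z where "z \<in> R" "x * y * z = 1" unfolding units_in_def by blast
  then have "x * (y * z) = 1" "y * z \<in> R"
    using is_subring_mult[OF assms(1) assms(3)] by (simp_all add: mult.assoc)
  with assms(2) show ?thesis unfolding units_in_def by blast
qed

lemma Irr_in_subset_Sqf_in: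
  assumes sub: "is_subring R"
  shows "Irr_in R \<subseteq> Sqf_in R"
proof
  fix a assume a: "a \<in> Irr_in R"
  then have split: "x \<in> units_in R \<or> y \<in> units_in R"
    if "x \<in> R" "y \<in> R" "a = x * y" for x y
    using that unfolding Irr_in_def by blast
  have "b \<in> units_in R" if b: "b \<in> R" "c \<in> R" "a = b ^ 2 * c" for b c
  proof -
    have "a = b * (b * c)" using b(3) by (simp add: power2_eq_square mult.assoc)
    with split b(1) is_subring_mult[OF sub b(1,2)]
    have "b \<in> units_in R \<or> b * c \<in> units_in R" by blast
    then show ?thesis using units_in_multD[OF sub b(1,2)] by blast
  qed
  with a show "a \<in> Sqf_in R" unfolding Sqf_in_def Irr_in_def by blast
qed

lemma prime_dvd_imp_Irr_in_factor:
  fixes R :: "'a::{factorial_semiring, idom} set"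
  assumes sub: "is_subring R" and units: "units_in R = {x. is_unit x}"
    and "c \<in> R" "c \<noteq> 0" "prime p" "p dvd c"
  obtains r c' where "r \<in> Irr_in R" "c' \<in> R" "c = r * c'" "p dvd r"
  using assms(3-)
proof (induction "size (prime_factorization c)" arbitrary: c thesis rule: less_induct)
  case less
  note that = less.prems(1) and c = less.prems(2-5)
  show ?case
  proof (cases "c \<in> Irr_in R")
    case True
    have "1 \<in> R" using sub by (simp add: is_subring_def)
    from that[OF True this _ c(4)] show ?thesis by simp
  next
    case False
    from False c(1,2) have "c \<in> units_in R \<or>
        (\<exists>d\<in>R. \<exists>e\<in>R. c = d * e \<and> d \<notin> units_in R \<and> e \<notin> units_in R)"
      unfolding Irr_in_def by blast
    moreover have "\<not> is_unit c" using c(3,4) dvd_unit_imp_unit not_prime_unit by blast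
    ultimately obtain d0 e0 where d0e0: "d0 \<in> R" "e0 \<in> R" "c = d0 * e0"
        "\<not> is_unit d0" "\<not> is_unit e0"
      using units by auto
    have "p dvd d0 \<or> p dvd e0" using c(3,4) d0e0(3) by (simp add: prime_dvd_mult_iff)
    then obtain d e
      where de: "d \<in> R" "e \<in> R" "c = d * e" "\<not> is_unit d" "\<not> is_unit e" "p dvd d"
      using d0e0 mult.commute[of d0 e0] by blast
    have nonzero: "d \<noteq> 0" "e \<noteq> 0" using de(3) c(2) by simp_all
    with de(5) have "prime_factorization e \<noteq> {#}"
      by (simp add: prime_factorization_empty_iff)
    with de(3) nonzero have "size (prime_factorization d) < size (prime_factorization c)"
      by (simp add: prime_factorization_mult nonempty_has_size)
    from less.hyps[OF this _ de(1) nonzero(1) c(3) de(6)]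
    obtain r d' where r: "r \<in> Irr_in R" "d' \<in> R" "d = r * d'" "p dvd r" .
    have "c = r * (d' * e)" using de(3) r(3) by (simp add: mult.assoc)
    then show ?thesis by (rule that[OF r(1) is_subring_mult[OF sub r(2) de(2)] _ r(4)])
  qed
qed

lemma irreducible_prime_dvd_imp_associated:
  fixes r :: "'a::factorial_semiring"
  assumes "irreducible r" "prime p" "p dvd r"
  shows "normalize r = normalize p"
  using prime_elem_associated[OF irreducible_imp_prime_elem prime_imp_prime_elem, OF assms]
  by (rule sym)

lemma square_factor_in_subring:
  fixes R :: "'a::{factorial_semiring, idom} set"
  assumes sub: "is_subring R" and units: "units_in R = {x. is_unit x}"
    and Irr: "Irr_in R \<subseteq> {a. irreducible a}"
    and "a \<in> R" "a \<noteq> 0" "prime p" "p ^ 2 dvd a"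
  shows "\<exists>b\<in>R. \<exists>c\<in>R. a = b ^ 2 * c \<and> \<not> is_unit b"
proof -
  have "p dvd a" using assms(7) by (simp add: power2_eq_square dvd_mult_left)
  then obtain r c where r: "r \<in> Irr_in R" "c \<in> R" "a = r * c" "p dvd r"
    using prime_dvd_imp_Irr_in_factor[OF sub units assms(4-6)] by blast
  have r_assoc: "normalize r = normalize p"
    using Irr r(1,4) assms(6) by (intro irreducible_prime_dvd_imp_associated) auto
  have "r * p dvd p * p" using associatedD1[OF r_assoc] by (rule mult_dvd_mono) simp
  also have "p * p dvd r * c" using assms(7) r(3) by (simp add: power2_eq_square)
  finally have "p dvd c" using r(3) assms(5) by simp
  moreover have "c \<noteq> 0" using r(3) assms(5) by simp
  ultimately obtain r' c' where r': "r' \<in> Irr_in R" "c' \<in> R" "c = r' * c'" "p dvd r'"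
    using prime_dvd_imp_Irr_in_factor[OF sub units r(2) _ assms(6)] by blast
  have "normalize r' = normalize p"
    using Irr r'(1,4) assms(6) by (intro irreducible_prime_dvd_imp_associated) auto
  with r_assoc have "normalize r' = normalize r" by (simp only:)
  then obtain u where u: "is_unit u" "r' = u * r" by (elim associatedE1)
  have "a = r ^ 2 * (u * c')" using r(3) r'(3) u(2) by (simp add: power2_eq_square ac_simps)
  moreover have "u \<in> R" using u(1) units unfolding units_in_def by blast
  then have "u * c' \<in> R" using is_subring_mult[OF sub _ r'(2)] by blast
  moreover have "r \<in> R" "\<not> is_unit r" using r(1) units by (simp_all add: Irr_in_def)
  ultimately show ?thesis by blast
qed

lemma Sqf_in_subset_squarefree:
  fixes R :: "'a::{factorial_semiring, idom} set"
  assumes sub: "is_subring R" and units: "units_in R = {x. is_unit x}"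
    and Irr: "Irr_in R \<subseteq> {a. irreducible a}"
  shows "Sqf_in R \<subseteq> {a. squarefree a}"
proof
  fix a assume a: "a \<in> Sqf_in R"
  then have "a \<in> R" "a \<noteq> 0" using zero_notin_Sqf_in[OF sub] by (auto simp only: Sqf_in_def)
  moreover have "\<not> p ^ 2 dvd a" if "prime p" for p
    using square_factor_in_subring[OF sub units Irr \<open>a \<in> R\<close> \<open>a \<noteq> 0\<close> that] a units
    unfolding Sqf_in_def by blast
  ultimately show "a \<in> {a. squarefree a}" by (simp add: squarefree_factorial_semiring)
qed

theorem lemma3p1:
  fixes R :: "'a::{factorial_semiring, idom} set"
  assumes "is_subring R"
    and "units_in R = {x. is_unit x}"
  shows "(Irr_in R \<subseteq> {a. irreducible a} \<longrightarrow> Sqf_in R \<subseteq> {a. squarefree a})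
       \<and> (Sqf_in R \<subseteq> {a. squarefree a} \<longrightarrow> Irr_in R \<subseteq> {a. squarefree a})"
proof (intro conjI impI)
  show "Sqf_in R \<subseteq> {a. squarefree a}" if "Irr_in R \<subseteq> {a. irreducible a}"
    using Sqf_in_subset_squarefree[OF assms that] .
  show "Irr_in R \<subseteq> {a. squarefree a}" if "Sqf_in R \<subseteq> {a. squarefree a}"
    using Irr_in_subset_Sqf_in[OF assms(1)] that by (rule subset_trans)
qed

end
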